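(* Let $K\ge1$, $f_0^-\equiv0$, and let $f_1^-,\dots,f_K^-:\mathcal{S}\times\mathcal{A}\to\mathbb{R}$ and $b_1,\dots,b_K:\mathcal{S}\times\mathcal{A}\to[0,\infty)$ satisfy, for all $k\in\{1,\dots,K\}$ and all $(s,a)$, $$f_k^-(s,a)\le(\mathcal{T}f_{k-1}^-)(s,a)\le f_k^-(s,a)+2b_k(s,a).$$ For each $k$ let $\pi_k$ be a deterministic greedy policy w.r.t. $f_k^-$, i.e. $\pi_k(s)\in\arg\max_a f_k^-(s,a)$. Then for every (stationary) policy $\pi_{\mathrm{cp}}$, $$J_K(\pi_{\mathrm{cp}})-J_K(\pi_{K:1})\le2\sum_{t=0}^{K-1}\gamma^t\,\mathbb{E}_{(s,a)\sim d_t^{\pi_{\mathrm{cp}}}}[b_{K-t}(s,a)].$$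
   Context: MDP $(\mathcal{S},\mathcal{A},P,R,\gamma,d_0)$ with finite $\mathcal{S},\mathcal{A}$, reward $R:\mathcal{S}\times\mathcal{A}\to[0,R_{\max}]$, $\gamma\in[0,1)$. The Bellman optimality operator is $(\mathcal{T}f)(s,a)=R(s,a)+\gamma\mathbb{E}_{s'\sim P(\cdot\mid s,a)}[\max_{a'}f(s',a')]$. The non-stationary policy $\pi_{K:1}$ generates $s_0\sim d_0$, $a_t\sim\pi_{K-t}(\cdot\mid s_t)$, $r_t=R(s_t,a_t)$, $s_{t+1}\sim P(\cdot\mid s_t,a_t)$ for $t=0,\dots,K-1$, and $J_K(\pi_{K:1})=\mathbb{E}[\sum_{t=0}^{K-1}\gamma^tr_t]$. For a stationary policy $\pi$, $J_K(\pi)$ is the same quantity with all $\pi_k=\pi$, and $d_t^\pi(s,a)=\Pr_\pi[s_t=s,a_t=a]$. *)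

theory Defs
  imports Complex_Main
begin

text \<open>Finite MDP. States of type 's::finite, actions of type 'a::finite.
  Transition kernel P s a s' = Pr[s' | s, a]; initial distribution d0;
  (stochastic) policies are functions pol s a = Pr[a | s].\<close>

definition is_dist :: "('x::finite \<Rightarrow> real) \<Rightarrow> bool" where
  "is_dist p \<longleftrightarrow> (\<forall>x. 0 \<le> p x) \<and> (\<Sum>x\<in>UNIV. p x) = 1"

definition valid_mdp :: "('s::finite \<Rightarrow> 'a::finite \<Rightarrow> 's \<Rightarrow> real) \<Rightarrow> ('s \<Rightarrow> real) \<Rightarrow> bool" where
  "valid_mdp P d0 \<longleftrightarrow> (\<forall>s a. is_dist (P s a)) \<and> is_dist d0"

definition is_policy :: "('s::finite \<Rightarrow> 'a::finite \<Rightarrow> real) \<Rightarrow> bool" where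
  "is_policy pol \<longleftrightarrow> (\<forall>s. is_dist (pol s))"

definition det_pol :: "('s \<Rightarrow> 'a) \<Rightarrow> 's \<Rightarrow> 'a \<Rightarrow> real" where
  "det_pol p s a = (if a = p s then 1 else 0)"

definition bellman ::
  "('s::finite \<Rightarrow> 'a::finite \<Rightarrow> 's \<Rightarrow> real) \<Rightarrow> ('s \<Rightarrow> 'a \<Rightarrow> real) \<Rightarrow> real
   \<Rightarrow> ('s \<Rightarrow> 'a \<Rightarrow> real) \<Rightarrow> 's \<Rightarrow> 'a \<Rightarrow> real" where
  "bellman P R \<gamma> f s a = R s a + \<gamma> * (\<Sum>s'\<in>UNIV. P s a s' * (MAX a'. f s' a'))"

fun state_dist ::
  "('s::finite \<Rightarrow> 'a::finite \<Rightarrow> 's \<Rightarrow> real) \<Rightarrow> ('s \<Rightarrow> real) \<Rightarrow> (nat \<Rightarrow> 's \<Rightarrow> 'a \<Rightarrow> real)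
   \<Rightarrow> nat \<Rightarrow> 's \<Rightarrow> real" where
  "state_dist P d0 pols 0 s = d0 s"
| "state_dist P d0 pols (Suc t) s' =
     (\<Sum>s\<in>UNIV. \<Sum>a\<in>UNIV. state_dist P d0 pols t s * pols t s a * P s a s')"

definition occ ::
  "('s::finite \<Rightarrow> 'a::finite \<Rightarrow> 's \<Rightarrow> real) \<Rightarrow> ('s \<Rightarrow> real) \<Rightarrow> (nat \<Rightarrow> 's \<Rightarrow> 'a \<Rightarrow> real)
   \<Rightarrow> nat \<Rightarrow> 's \<Rightarrow> 'a \<Rightarrow> real" where
  "occ P d0 pols t s a = state_dist P d0 pols t s * pols t s a"

definition J ::
  "('s::finite \<Rightarrow> 'a::finite \<Rightarrow> 's \<Rightarrow> real) \<Rightarrow> ('s \<Rightarrow> 'a \<Rightarrow> real) \<Rightarrow> real \<Rightarrow> ('s \<Rightarrow> real)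
   \<Rightarrow> nat \<Rightarrow> (nat \<Rightarrow> 's \<Rightarrow> 'a \<Rightarrow> real) \<Rightarrow> real" where
  "J P R \<gamma> d0 K pols = (\<Sum>t<K. \<gamma>^t * (\<Sum>s\<in>UNIV. \<Sum>a\<in>UNIV. occ P d0 pols t s a * R s a))"

definition nonstat :: "nat \<Rightarrow> (nat \<Rightarrow> 's \<Rightarrow> 'a) \<Rightarrow> nat \<Rightarrow> 's \<Rightarrow> 'a \<Rightarrow> real" where
  "nonstat K pis t = det_pol (pis (K - t))"

end

theory Submission
  imports Defs
begin

text \<open>Let V k s = (MAX a. f k s a), so V 0 = 0. For any policy sequence, telescoping the
  values V (K - t) along the trajectory writes the K-step return as the expectation of V K at
  the initial state plus the discounted expected Bellman residuals
  bellman P R \<gamma> (f (k - 1)) s a - V k s with k = K - t. The upper hypothesis bounds every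
  residual by 2 * b k s a, which bounds the return of pi_cp from above; the lower hypothesis
  makes the residual at the greedy action pis k s nonnegative, so the return of the
  non-stationary greedy policy is at least the expectation of V K at the initial state.\<close>

lemma sum_discounted_telescope:
  "(\<Sum>t<K. (\<gamma>::real)^t * (x t - \<gamma> * x (Suc t))) = x 0 - \<gamma>^K * x K"
  by (induction K) (auto simp: algebra_simps)

lemma is_policy_det_pol: "is_policy (det_pol (p :: 's::finite \<Rightarrow> 'a::finite))"
  by (simp add: is_policy_def is_dist_def det_pol_def)

lemma state_dist_nonneg:
  assumes "valid_mdp P d0" and "\<And>t. is_policy (pols t)"
  shows "0 \<le> state_dist P d0 pols t s"
  using assms
  by (induction t arbitrary: s)
     (auto intro!: sum_nonneg simp: valid_mdp_def is_policy_def is_dist_def)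

lemma occ_nonneg:
  assumes "valid_mdp P d0" and "\<And>t. is_policy (pols t)"
  shows "0 \<le> occ P d0 pols t s a"
  using state_dist_nonneg[OF assms] assms(2)
  by (simp add: occ_def is_policy_def is_dist_def)

lemma sum_state_dist_Suc:
  "(\<Sum>s'\<in>UNIV. state_dist P d0 pols (Suc t) s' * h s') =
   (\<Sum>s\<in>UNIV. \<Sum>a\<in>UNIV. occ P d0 pols t s a * (\<Sum>s'\<in>UNIV. P s a s' * h s'))"
proof -
  have "(\<Sum>s'\<in>UNIV. state_dist P d0 pols (Suc t) s' * h s') =
     (\<Sum>s'\<in>UNIV. \<Sum>s\<in>UNIV. \<Sum>a\<in>UNIV. occ P d0 pols t s a * (P s a s' * h s'))"
    by (simp add: sum_distrib_right mult.assoc occ_def)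
  also have "\<dots> = (\<Sum>s\<in>UNIV. \<Sum>s'\<in>UNIV. \<Sum>a\<in>UNIV. occ P d0 pols t s a * (P s a s' * h s'))"
    by (rule sum.swap)
  also have "\<dots> = (\<Sum>s\<in>UNIV. \<Sum>a\<in>UNIV. \<Sum>s'\<in>UNIV. occ P d0 pols t s a * (P s a s' * h s'))"
    by (rule sum.cong[OF refl], rule sum.swap)
  finally show ?thesis
    by (simp only: sum_distrib_left)
qed

lemma sum_occ_state_value:
  assumes "is_policy (pols t)"
  shows "(\<Sum>s\<in>UNIV. \<Sum>a\<in>UNIV. occ P d0 pols t s a * v s) = (\<Sum>s\<in>UNIV. state_dist P d0 pols t s * v s)"
  using assms
  by (simp add: occ_def is_policy_def is_dist_def flip: sum_distrib_left sum_distrib_right)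

lemma J_eq_value_plus_bellman_residuals:
  assumes "\<And>t. is_policy (pols t)"
  shows "J P R \<gamma> d0 K pols =
    (\<Sum>s\<in>UNIV. d0 s * v 0 s) - \<gamma>^K * (\<Sum>s\<in>UNIV. state_dist P d0 pols K s * v K s)
    + (\<Sum>t<K. \<gamma>^t * (\<Sum>s\<in>UNIV. \<Sum>a\<in>UNIV. occ P d0 pols t s a *
         (R s a + \<gamma> * (\<Sum>s'\<in>UNIV. P s a s' * v (Suc t) s') - v t s)))"
proof -
  define E where "E t = (\<Sum>s\<in>UNIV. state_dist P d0 pols t s * v t s)" for t
  define r where "r t = (\<Sum>s\<in>UNIV. \<Sum>a\<in>UNIV. occ P d0 pols t s a * R s a)" for t
  have residual: "(\<Sum>s\<in>UNIV. \<Sum>a\<in>UNIV. occ P d0 pols t s a *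
      (R s a + \<gamma> * (\<Sum>s'\<in>UNIV. P s a s' * v (Suc t) s') - v t s))
    = r t - (E t - \<gamma> * E (Suc t))" for t
  proof -
    have "(\<Sum>s\<in>UNIV. \<Sum>a\<in>UNIV. occ P d0 pols t s a *
        (R s a + \<gamma> * (\<Sum>s'\<in>UNIV. P s a s' * v (Suc t) s') - v t s))
      = r t + \<gamma> * (\<Sum>s\<in>UNIV. \<Sum>a\<in>UNIV. occ P d0 pols t s a * (\<Sum>s'\<in>UNIV. P s a s' * v (Suc t) s'))
        - (\<Sum>s\<in>UNIV. \<Sum>a\<in>UNIV. occ P d0 pols t s a * v t s)"
      by (simp add: r_def algebra_simps sum.distrib sum_subtractf sum_distrib_left)
    also have "\<dots> = r t - (E t - \<gamma> * E (Suc t))"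
      by (simp add: E_def sum_state_dist_Suc sum_occ_state_value[OF assms] del: state_dist.simps(2))
    finally show ?thesis .
  qed
  have "J P R \<gamma> d0 K pols = (\<Sum>t<K. \<gamma>^t * r t)"
    by (simp add: J_def r_def)
  also have "\<dots> = (\<Sum>t<K. \<gamma>^t * (E t - \<gamma> * E (Suc t)))
      + (\<Sum>t<K. \<gamma>^t * (r t - (E t - \<gamma> * E (Suc t))))"
    by (simp add: algebra_simps flip: sum.distrib)
  also have "\<dots> = E 0 - \<gamma>^K * E K + (\<Sum>t<K. \<gamma>^t * (r t - (E t - \<gamma> * E (Suc t))))"
    by (simp only: sum_discounted_telescope)
  finally show ?thesis
    by (simp add: residual E_def)
qed

lemma Max_eq_is_arg_max:
  fixes h :: "'a::finite \<Rightarrow> 'b::linorder"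
  assumes "is_arg_max h (\<lambda>_. True) x"
  shows "(MAX a. h a) = h x"
  using assms by (intro Max_eqI) (auto simp: is_arg_max_def not_less)

lemma J_le_greedy_value_plus_bonus:
  fixes f b :: "nat \<Rightarrow> 's::finite \<Rightarrow> 'a::finite \<Rightarrow> real"
  assumes mdp: "valid_mdp P d0" and pols: "\<And>t. is_policy (pols t)" and \<gamma>: "0 \<le> \<gamma>"
    and f0: "f 0 = (\<lambda>s a. 0)"
    and upper: "\<And>k s a. k \<in> {1..K} \<Longrightarrow> bellman P R \<gamma> (f (k - 1)) s a \<le> f k s a + 2 * b k s a"
  shows "J P R \<gamma> d0 K pols \<le> (\<Sum>s\<in>UNIV. d0 s * (MAX a. f K s a))
    + 2 * (\<Sum>t<K. \<gamma>^t * (\<Sum>s\<in>UNIV. \<Sum>a\<in>UNIV. occ P d0 pols t s a * b (K - t) s a))"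
proof -
  define v where "v t s = (MAX a. f (K - t) s a)" for t s
  have residual_le: "R s a + \<gamma> * (\<Sum>s'\<in>UNIV. P s a s' * v (Suc t) s') - v t s \<le> 2 * b (K - t) s a"
    if "t < K" for t s a
  proof -
    have "R s a + \<gamma> * (\<Sum>s'\<in>UNIV. P s a s' * v (Suc t) s') = bellman P R \<gamma> (f (K - t - 1)) s a"
      by (simp add: bellman_def v_def)
    also have "\<dots> \<le> f (K - t) s a + 2 * b (K - t) s a"
      using upper[of "K - t"] that by simp
    also have "f (K - t) s a \<le> v t s"
      by (simp add: v_def)
    finally show ?thesis by simp
  qed
  have "J P R \<gamma> d0 K pols = (\<Sum>s\<in>UNIV. d0 s * v 0 s)
    + (\<Sum>t<K. \<gamma>^t * (\<Sum>s\<in>UNIV. \<Sum>a\<in>UNIV. occ P d0 pols t s a *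
         (R s a + \<gamma> * (\<Sum>s'\<in>UNIV. P s a s' * v (Suc t) s') - v t s)))"
    using J_eq_value_plus_bellman_residuals[OF pols, where v = v] by (simp add: v_def f0)
  also have "\<dots> \<le> (\<Sum>s\<in>UNIV. d0 s * v 0 s)
    + (\<Sum>t<K. \<gamma>^t * (\<Sum>s\<in>UNIV. \<Sum>a\<in>UNIV. occ P d0 pols t s a * (2 * b (K - t) s a)))"
    using \<gamma> residual_le occ_nonneg[OF mdp pols]
    by (intro add_left_mono sum_mono mult_left_mono) auto
  finally show ?thesis
    by (simp add: v_def sum_distrib_left mult_ac)
qed

lemma greedy_value_le_J_nonstat:
  fixes f :: "nat \<Rightarrow> 's::finite \<Rightarrow> 'a::finite \<Rightarrow> real"
  assumes mdp: "valid_mdp P d0" and \<gamma>: "0 \<le> \<gamma>" and f0: "f 0 = (\<lambda>s a. 0)"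
    and lower: "\<And>k s a. k \<in> {1..K} \<Longrightarrow> f k s a \<le> bellman P R \<gamma> (f (k - 1)) s a"
    and greedy: "\<And>k s. k \<in> {1..K} \<Longrightarrow> is_arg_max (f k s) (\<lambda>_. True) (pis k s)"
  shows "(\<Sum>s\<in>UNIV. d0 s * (MAX a. f K s a)) \<le> J P R \<gamma> d0 K (nonstat K pis)"
proof -
  define v where "v t s = (MAX a. f (K - t) s a)" for t s
  have pols: "is_policy (nonstat K pis t)" for t
    by (simp add: nonstat_def is_policy_det_pol)
  have residual_nonneg: "0 \<le> occ P d0 (nonstat K pis) t s a *
      (R s a + \<gamma> * (\<Sum>s'\<in>UNIV. P s a s' * v (Suc t) s') - v t s)"
    if "t < K" for t s a
  proof (cases "a = pis (K - t) s")
    case True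
    have "v t s = f (K - t) s a"
      using Max_eq_is_arg_max[OF greedy[of "K - t" s]] that True by (simp add: v_def)
    also have "\<dots> \<le> bellman P R \<gamma> (f (K - t - 1)) s a"
      using lower[of "K - t"] that by simp
    also have "\<dots> = R s a + \<gamma> * (\<Sum>s'\<in>UNIV. P s a s' * v (Suc t) s')"
      by (simp add: bellman_def v_def)
    finally show ?thesis
      using occ_nonneg[OF mdp pols] by simp
  next
    case False
    then show ?thesis
      by (simp add: occ_def nonstat_def det_pol_def)
  qed
  have "J P R \<gamma> d0 K (nonstat K pis) = (\<Sum>s\<in>UNIV. d0 s * v 0 s)
    + (\<Sum>t<K. \<gamma>^t * (\<Sum>s\<in>UNIV. \<Sum>a\<in>UNIV. occ P d0 (nonstat K pis) t s a *
         (R s a + \<gamma> * (\<Sum>s'\<in>UNIV. P s a s' * v (Suc t) s') - v t s)))"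
    using J_eq_value_plus_bellman_residuals[OF pols, where v = v] by (simp add: v_def f0)
  also have "\<dots> \<ge> (\<Sum>s\<in>UNIV. d0 s * v 0 s)"
    using \<gamma> residual_nonneg
    by (intro add_increasing2 sum_nonneg mult_nonneg_nonneg[OF zero_le_power]) auto
  finally show ?thesis
    by (simp add: v_def)
qed

theorem mainTheorem13:
  fixes P :: "'s::finite \<Rightarrow> 'a::finite \<Rightarrow> 's \<Rightarrow> real"
    and R :: "'s \<Rightarrow> 'a \<Rightarrow> real" and Rmax \<gamma> :: real and d0 :: "'s \<Rightarrow> real"
    and K :: nat
    and f :: "nat \<Rightarrow> 's \<Rightarrow> 'a \<Rightarrow> real" and b :: "nat \<Rightarrow> 's \<Rightarrow> 'a \<Rightarrow> real"
    and pis :: "nat \<Rightarrow> 's \<Rightarrow> 'a" and pi_cp :: "'s \<Rightarrow> 'a \<Rightarrow> real"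
  assumes mdp: "valid_mdp P d0"
    and R_range: "\<forall>s a. 0 \<le> R s a \<and> R s a \<le> Rmax"
    and gamma: "0 \<le> \<gamma>" "\<gamma> < 1"
    and K: "1 \<le> K"
    and f0: "f 0 = (\<lambda>s a. 0)"
    and b_nonneg: "\<forall>k\<in>{1..K}. \<forall>s a. 0 \<le> b k s a"
    and lower: "\<forall>k\<in>{1..K}. \<forall>s a. f k s a \<le> bellman P R \<gamma> (f (k - 1)) s a"
    and upper: "\<forall>k\<in>{1..K}. \<forall>s a. bellman P R \<gamma> (f (k - 1)) s a \<le> f k s a + 2 * b k s a"
    and greedy: "\<forall>k\<in>{1..K}. \<forall>s. is_arg_max (f k s) (\<lambda>_. True) (pis k s)"
    and cp: "is_policy pi_cp"
  shows "J P R \<gamma> d0 K (\<lambda>_. pi_cp) - J P R \<gamma> d0 K (nonstat K pis)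
         \<le> 2 * (\<Sum>t<K. \<gamma>^t * (\<Sum>s\<in>UNIV. \<Sum>a\<in>UNIV. occ P d0 (\<lambda>_. pi_cp) t s a * b (K - t) s a))"
proof -
  have "J P R \<gamma> d0 K (\<lambda>_. pi_cp) \<le> (\<Sum>s\<in>UNIV. d0 s * (MAX a. f K s a))
    + 2 * (\<Sum>t<K. \<gamma>^t * (\<Sum>s\<in>UNIV. \<Sum>a\<in>UNIV. occ P d0 (\<lambda>_. pi_cp) t s a * b (K - t) s a))"
    by (rule J_le_greedy_value_plus_bonus[where f = f]) (use mdp cp gamma f0 upper in auto)
  moreover have "(\<Sum>s\<in>UNIV. d0 s * (MAX a. f K s a)) \<le> J P R \<gamma> d0 K (nonstat K pis)"
    by (rule greedy_value_le_J_nonstat[where f = f]) (use mdp gamma f0 lower greedy in auto)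
  ultimately show ?thesis
    by linarith
qed

end
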